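(* Let $a,b,a',b'\in\mathbb{R}$, $n,m\in\mathbb{N}_0$, and for $\sigma>0$ let \[ f(\sigma)=\int_a^b\int_{a'}^{b'}x^ny^me^{-\sigma^2(x-y)^2}\,dy\,dx. \] Let $\Delta=\{b-b',\,b-a',\,a-b',\,a-a'\}$. Then $f$ is a linear combination (with coefficients independent of $\sigma$) of terms of the form \[ \sigma^{-2k}e^{-\sigma^2\delta^2}\qquad\text{and}\qquad\sigma^{-(2k-1)}\operatorname{Erf}(\sigma\delta),\qquad k\in\{1,2,\dots\},\ \delta\in\Delta, \] where the exponent $\nu$ of $\sigma^{-1}$ (namely $\nu=2k$ in the first case and $\nu=2k-1$ in the second) satisfies $1\le\nu\le n+m+2$. The coefficient of a term belonging to $\delta=c-c'$ with $c\in\{a,b\}$ and $c'\in\{a',b'\}$ is a homogeneous polynomial of degree $n+m+2-\nu$ in $\mathbb{Q}[c,c']$.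
   Context: $\operatorname{Erf}(\xi)=\int_0^\xi e^{-x^2}\,dx$ (the odd primitive of the Gaussian, normalized without the factor $2/\sqrt\pi$). *)

theory Defs
  imports "HOL-Analysis.Analysis"
begin

text \<open>Erf(xi) = oriented integral of exp(-x^2) from 0 to xi (no 2/sqrt pi factor).\<close>
definition Erf :: "real \<Rightarrow> real" where
  "Erf \<xi> = (LBINT x=0..\<xi>. exp (- (x\<^sup>2)))"

definition gauss_double_int :: "nat \<Rightarrow> nat \<Rightarrow> real \<Rightarrow> real \<Rightarrow> real \<Rightarrow> real \<Rightarrow> real \<Rightarrow> real" where
  "gauss_double_int n m a b a' b' \<sigma> =
     (LBINT x=a..b. (LBINT y=a'..b'. x ^ n * y ^ m * exp (- (\<sigma>\<^sup>2 * (x - y)\<^sup>2))))"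

end

theory Submission
  imports Defs
begin

text \<open>
  Write \<open>T(i,j,\<nu>) = x\<^sup>i y\<^sup>j \<sigma>\<^sup>-\<^sup>\<nu> g\<^sub>\<nu>(\<sigma>(x - y))\<close>, where \<open>g\<^sub>\<nu>\<close> is \<open>exp(-t\<^sup>2)\<close> for even and
  \<open>Erf\<close> for odd \<open>\<nu>\<close>. Every \<open>T(i,j,\<nu>)\<close> has a primitive in \<open>y\<close> that is a rational
  combination of terms \<open>T(i',j',\<nu>')\<close> with \<open>\<nu>' \<ge> 1\<close> and weight \<open>i' + j' + \<nu>' = i + j + \<nu> + 1\<close>:
  for odd \<open>\<nu>\<close> integrate by parts once to reach an even exponent, and for even \<open>\<nu>\<close> the identity
  \<open>\<partial>\<^sub>y T(i,j,\<nu>+2) = j T(i,j-1,\<nu>+2) + 2 T(i+1,j,\<nu>) - 2 T(i,j+1,\<nu>)\<close> lowers the degree in \<open>y\<close>.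
  As \<open>T\<close> is symmetric or antisymmetric under \<open>x \<leftrightarrow> y\<close>, the same holds for primitives in \<open>x\<close>.
  Integrating \<open>T(n,m,0)\<close> in \<open>y\<close> and then in \<open>x\<close> gives such a combination \<open>K\<close> of weight
  \<open>n + m + 2\<close>, and the double integral is \<open>K(b,b') - K(b,a') - K(a,b') + K(a,a')\<close>.
\<close>

lemma has_real_derivative_Erf: "(Erf has_real_derivative exp (- (t\<^sup>2))) (at t)"
proof -
  define e where "e = \<bar>t\<bar> + 1"
  have "continuous_on {-e..e} (\<lambda>x::real. exp (- (x\<^sup>2)))"
    by (intro continuous_intros)
  then have "((\<lambda>u. LBINT y=ereal 0..u. exp (- (y\<^sup>2))) has_vector_derivative exp (- (t\<^sup>2)))
      (at t within {-e<..<e})"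
    by (intro has_vector_derivative_within_subset[OF interval_integral_FTC2]) (auto simp: e_def)
  then show ?thesis
    by (subst (asm) has_vector_derivative_within_open)
       (auto simp: e_def has_real_derivative_iff_has_vector_derivative Erf_def[abs_def] zero_ereal_def)
qed

lemma has_real_derivative_Erf_comp [derivative_intros]:
  "(f has_real_derivative f') (at x within s) \<Longrightarrow>
   ((\<lambda>x. Erf (f x)) has_real_derivative exp (- ((f x)\<^sup>2)) * f') (at x within s)"
  using DERIV_chain2[OF has_real_derivative_Erf] by blast

lemma Erf_0 [simp]: "Erf 0 = 0"
  by (simp add: Erf_def zero_ereal_def)

lemma isCont_Erf: "isCont Erf t"
  using has_real_derivative_Erf by (rule DERIV_isCont)

lemma continuous_on_Erf [continuous_intros]:
  "continuous_on s f \<Longrightarrow> continuous_on s (\<lambda>x. Erf (f x))"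
  by (rule continuous_on_compose2[of UNIV Erf])
     (auto intro: continuous_at_imp_continuous_on isCont_Erf)

lemma Erf_minus: "Erf (- t) = - Erf t"
proof -
  have "((\<lambda>t. Erf (- t) + Erf t) has_real_derivative 0) (at t)" for t
    by (rule derivative_eq_intros refl | simp)+
  then have "Erf (- t) + Erf t = Erf (- 0) + Erf 0"
    by (intro DERIV_isconst_all) blast
  then show ?thesis by simp
qed

definition gauss_kernel :: "nat \<Rightarrow> real \<Rightarrow> real \<Rightarrow> real" where
  "gauss_kernel \<nu> \<sigma> \<delta> = (if even \<nu> then (1 / \<sigma> ^ \<nu>) * exp (- (\<sigma>\<^sup>2 * \<delta>\<^sup>2))
                          else (1 / \<sigma> ^ \<nu>) * Erf (\<sigma> * \<delta>))"

definition gauss_term :: "nat \<Rightarrow> nat \<Rightarrow> nat \<Rightarrow> real \<Rightarrow> real \<Rightarrow> real \<Rightarrow> real" where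
  "gauss_term i j \<nu> \<sigma> x y = x ^ i * y ^ j * gauss_kernel \<nu> \<sigma> (x - y)"

lemma gauss_kernel_minus: "gauss_kernel \<nu> \<sigma> (- \<delta>) = (-1) ^ \<nu> * gauss_kernel \<nu> \<sigma> \<delta>"
  by (simp add: gauss_kernel_def Erf_minus)

lemma gauss_term_swap: "gauss_term i j \<nu> \<sigma> y x = (-1) ^ \<nu> * gauss_term j i \<nu> \<sigma> x y"
  using gauss_kernel_minus[of \<nu> \<sigma> "x - y"] by (simp add: gauss_term_def)

lemma gauss_term_even_deriv:
  assumes "\<sigma> > 0"
  shows "((\<lambda>y. gauss_term i j (2*k+2) \<sigma> x y) has_real_derivative
     of_nat j * gauss_term i (j-1) (2*k+2) \<sigma> x y
     + 2 * (gauss_term (i+1) j (2*k) \<sigma> x y - gauss_term i (j+1) (2*k) \<sigma> x y)) (at y)"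
proof -
  define E where "E = exp (- (\<sigma>\<^sup>2 * (x - y)\<^sup>2))"
  have "((\<lambda>y. x ^ i * y ^ j * exp (- (\<sigma>\<^sup>2 * (x - y)\<^sup>2))) has_real_derivative
      of_nat j * x ^ i * y ^ (j - 1) * E + 2 * \<sigma>\<^sup>2 * (x ^ (i+1) * y ^ j - x ^ i * y ^ (j+1)) * E) (at y)"
    unfolding E_def by (auto intro!: derivative_eq_intros simp: algebra_simps)
  from DERIV_cdivide[OF this, of "\<sigma> ^ (2*k+2)"] show ?thesis
    using assms by (simp add: gauss_term_def gauss_kernel_def E_def field_simps power2_eq_square)
qed

lemma gauss_term_odd_deriv:
  assumes "\<sigma> > 0"
  shows "((\<lambda>y. gauss_term i j (2*k+1) \<sigma> x y) has_real_derivative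
     of_nat j * gauss_term i (j-1) (2*k+1) \<sigma> x y - gauss_term i j (2*k) \<sigma> x y) (at y)"
proof -
  define E where "E = exp (- (\<sigma>\<^sup>2 * (x - y)\<^sup>2))"
  have "((\<lambda>y. x ^ i * y ^ j * Erf (\<sigma> * (x - y))) has_real_derivative
      of_nat j * x ^ i * y ^ (j - 1) * Erf (\<sigma> * (x - y)) - \<sigma> * x ^ i * y ^ j * E) (at y)"
    unfolding E_def power_mult_distrib[symmetric]
    by (rule derivative_eq_intros refl | simp)+
  from DERIV_cdivide[OF this, of "\<sigma> ^ (2*k+1)"] show ?thesis
    using assms by (simp add: gauss_term_def gauss_kernel_def E_def field_simps)
qed

inductive gauss_comb :: "nat \<Rightarrow> nat \<Rightarrow> (real \<Rightarrow> real \<Rightarrow> real \<Rightarrow> real) \<Rightarrow> bool"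
  for w :: nat where
  gauss_comb_term: "w \<le> \<nu> \<Longrightarrow> i + j + \<nu> = D \<Longrightarrow> gauss_comb w D (gauss_term i j \<nu>)"
| gauss_comb_scale: "gauss_comb w D F \<Longrightarrow> gauss_comb w D (\<lambda>\<sigma> x y. of_rat c * F \<sigma> x y)"
| gauss_comb_add: "gauss_comb w D F \<Longrightarrow> gauss_comb w D G \<Longrightarrow>
    gauss_comb w D (\<lambda>\<sigma> x y. F \<sigma> x y + G \<sigma> x y)"

lemma gauss_comb_diff:
  "gauss_comb w D F \<Longrightarrow> gauss_comb w D G \<Longrightarrow> gauss_comb w D (\<lambda>\<sigma> x y. F \<sigma> x y - G \<sigma> x y)"
  using gauss_comb_add[OF _ gauss_comb_scale[of w D G "-1"], of F] by simp

lemma gauss_comb_swap: "gauss_comb w D F \<Longrightarrow> gauss_comb w D (\<lambda>\<sigma> x y. F \<sigma> y x)"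
proof (induction rule: gauss_comb.induct)
  case (gauss_comb_term \<nu> i j D)
  then have "gauss_comb w D (\<lambda>\<sigma> x y. of_rat ((-1) ^ \<nu>) * gauss_term j i \<nu> \<sigma> x y)"
    by (intro gauss_comb.intros) auto
  moreover have "gauss_term i j \<nu> \<sigma> y x = of_rat ((-1) ^ \<nu>) * gauss_term j i \<nu> \<sigma> x y" for \<sigma> x y
    unfolding of_rat_power of_rat_minus of_rat_1 by (rule gauss_term_swap)
  ultimately show ?case
    by simp
qed (auto intro: gauss_comb.intros)

lemma continuous_on_gauss_term: "continuous_on S (\<lambda>x. gauss_term i j \<nu> \<sigma> x y)"
proof (cases "even \<nu>")
  case True
  show ?thesis
    unfolding gauss_term_def gauss_kernel_def if_P[OF True] by (intro continuous_intros)
next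
  case False
  show ?thesis
    unfolding gauss_term_def gauss_kernel_def if_not_P[OF False] by (intro continuous_intros)
qed

lemma continuous_on_gauss_comb: "gauss_comb w D F \<Longrightarrow> continuous_on S (\<lambda>x. F \<sigma> x y)"
  by (induction rule: gauss_comb.induct) (auto intro!: continuous_intros continuous_on_gauss_term)

lemma gauss_term_even_primitive:
  "\<exists>G. gauss_comb 1 (i + j + 2*k + 1) G \<and>
     (\<forall>\<sigma>>0. \<forall>x y. ((\<lambda>y. G \<sigma> x y) has_real_derivative gauss_term i j (2*k) \<sigma> x y) (at y))"
proof (induction j arbitrary: i k rule: induct_nat_012)
  case 0
  let ?G = "\<lambda>\<sigma> x y. of_rat (-1) * gauss_term i 0 (2*k+1) \<sigma> x y"
  have "gauss_comb 1 (i + 0 + 2*k + 1) ?G"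
    by (intro gauss_comb.intros) auto
  moreover have "((\<lambda>y. ?G \<sigma> x y) has_real_derivative gauss_term i 0 (2*k) \<sigma> x y) (at y)"
    if "\<sigma> > 0" for \<sigma> x y
    using gauss_term_odd_deriv[OF that, of i 0 k x y] by (auto intro!: derivative_eq_intros)
  ultimately show ?case by blast
next
  case 1
  let ?G = "\<lambda>\<sigma> x y. of_rat (-1) * gauss_term (i+1) 0 (2*k+1) \<sigma> x y
                     - of_rat (1/2) * gauss_term i 0 (2*k+2) \<sigma> x y"
  have "gauss_comb 1 (i + 1 + 2*k + 1) ?G"
    by (intro gauss_comb.intros gauss_comb_diff) auto
  moreover have "((\<lambda>y. ?G \<sigma> x y) has_real_derivative gauss_term i 1 (2*k) \<sigma> x y) (at y)"
    if "\<sigma> > 0" for \<sigma> x y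
    using gauss_term_odd_deriv[OF that, of "i+1" 0 k x y] gauss_term_even_deriv[OF that, of i 0 k x y]
    by (auto intro!: derivative_eq_intros simp: of_rat_divide field_simps)
  ultimately show ?case by simp blast
next
  case (ge2 j)
  obtain G1 where G1: "gauss_comb 1 (i + Suc (Suc j) + 2*k + 1) G1"
    "\<forall>\<sigma>>0. \<forall>x y. ((\<lambda>y. G1 \<sigma> x y) has_real_derivative gauss_term (i+1) (j+1) (2*k) \<sigma> x y) (at y)"
    using ge2.IH(2)[of "i+1" k] by auto
  obtain G2 where G2: "gauss_comb 1 (i + Suc (Suc j) + 2*k + 1) G2"
    "\<forall>\<sigma>>0. \<forall>x y. ((\<lambda>y. G2 \<sigma> x y) has_real_derivative gauss_term i j (2*k+2) \<sigma> x y) (at y)"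
    using ge2.IH(1)[of i "k+1"] by auto
  \<comment> \<open>\<open>T(i,j+2,2k) = T(i+1,j+1,2k) + (j+1)/2 T(i,j,2k+2) - 1/2 \<partial>\<^sub>y T(i,j+1,2k+2)\<close>\<close>
  let ?G = "\<lambda>\<sigma> x y. G1 \<sigma> x y + of_rat (of_nat (j+1) / 2) * G2 \<sigma> x y
                     - of_rat (1/2) * gauss_term i (j+1) (2*k+2) \<sigma> x y"
  have "gauss_comb 1 (i + Suc (Suc j) + 2*k + 1) ?G"
    using G1(1) G2(1) by (intro gauss_comb.intros gauss_comb_diff) auto
  moreover have "((\<lambda>y. ?G \<sigma> x y) has_real_derivative gauss_term i (Suc (Suc j)) (2*k) \<sigma> x y) (at y)"
    if "\<sigma> > 0" for \<sigma> x y
    using gauss_term_even_deriv[OF that, of i "j+1" k x y]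
    by (auto intro!: derivative_eq_intros G1(2)[rule_format, OF that] G2(2)[rule_format, OF that]
             simp: of_rat_divide of_rat_add field_simps)
  ultimately show ?case by blast
qed

lemma gauss_term_primitive:
  "\<exists>G. gauss_comb 1 (i + j + \<nu> + 1) G \<and>
     (\<forall>\<sigma>>0. \<forall>x y. ((\<lambda>y. G \<sigma> x y) has_real_derivative gauss_term i j \<nu> \<sigma> x y) (at y))"
proof (cases "even \<nu>")
  case True
  then show ?thesis
    using gauss_term_even_primitive by (elim evenE) auto
next
  case False
  then obtain k where k: "\<nu> = 2*k + 1"
    by (elim oddE)
  obtain G where G: "gauss_comb 1 (i + j + \<nu> + 1) G"
    "\<forall>\<sigma>>0. \<forall>x y. ((\<lambda>y. G \<sigma> x y) has_real_derivative gauss_term i (j+1) (2*k) \<sigma> x y) (at y)"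
    using gauss_term_even_primitive[of i "j+1" k] k by auto
  let ?G = "\<lambda>\<sigma> x y. of_rat (1 / of_nat (j+1)) * (gauss_term i (j+1) \<nu> \<sigma> x y + G \<sigma> x y)"
  have "gauss_comb 1 (i + j + \<nu> + 1) ?G"
    using G(1) k by (intro gauss_comb.intros) auto
  moreover have "((\<lambda>y. ?G \<sigma> x y) has_real_derivative gauss_term i j \<nu> \<sigma> x y) (at y)"
    if "\<sigma> > 0" for \<sigma> x y
    using gauss_term_odd_deriv[OF that, of i "j+1" k x y] k
    by (auto intro!: derivative_eq_intros G(2)[rule_format, OF that]
             simp: of_rat_divide of_rat_add divide_simps)
  ultimately show ?thesis by blast
qed

lemma gauss_comb_primitive:
  "gauss_comb w D F \<Longrightarrow> \<exists>G. gauss_comb 1 (D + 1) G \<and>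
     (\<forall>\<sigma>>0. \<forall>x y. ((\<lambda>y. G \<sigma> x y) has_real_derivative F \<sigma> x y) (at y))"
proof (induction rule: gauss_comb.induct)
  case (gauss_comb_term \<nu> i j D)
  then show ?case using gauss_term_primitive[of i j \<nu>] by simp
next
  case (gauss_comb_scale D F c)
  then obtain G where "gauss_comb 1 (D + 1) G"
    "\<forall>\<sigma>>0. \<forall>x y. ((\<lambda>y. G \<sigma> x y) has_real_derivative F \<sigma> x y) (at y)"
    by blast
  then show ?case
    by (intro exI[of _ "\<lambda>\<sigma> x y. of_rat c * G \<sigma> x y"]) (auto intro!: gauss_comb.intros DERIV_cmult)
next
  case (gauss_comb_add D F G)
  then obtain F' G' where "gauss_comb 1 (D + 1) F'" "gauss_comb 1 (D + 1) G'"
    "\<forall>\<sigma>>0. \<forall>x y. ((\<lambda>y. F' \<sigma> x y) has_real_derivative F \<sigma> x y) (at y)"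
    "\<forall>\<sigma>>0. \<forall>x y. ((\<lambda>y. G' \<sigma> x y) has_real_derivative G \<sigma> x y) (at y)"
    by blast
  then show ?case
    by (intro exI[of _ "\<lambda>\<sigma> x y. F' \<sigma> x y + G' \<sigma> x y"]) (auto intro!: gauss_comb.intros DERIV_add)
qed

lemma gauss_comb_primitive_x:
  assumes "gauss_comb w D F"
  shows "\<exists>G. gauss_comb 1 (D + 1) G \<and>
     (\<forall>\<sigma>>0. \<forall>x y. ((\<lambda>x. G \<sigma> x y) has_real_derivative F \<sigma> x y) (at x))"
proof -
  obtain G where "gauss_comb 1 (D + 1) G"
    "\<forall>\<sigma>>0. \<forall>x y. ((\<lambda>y. G \<sigma> x y) has_real_derivative F \<sigma> y x) (at y)"
    using gauss_comb_primitive[OF gauss_comb_swap[OF assms]] by blast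
  then show ?thesis
    by (intro exI[of _ "\<lambda>\<sigma> x y. G \<sigma> y x"]) (auto intro: gauss_comb_swap)
qed

lemma interval_integral_FTC_real:
  fixes f F :: "real \<Rightarrow> real"
  assumes "continuous_on {min a b..max a b} f" "\<And>x. (F has_real_derivative f x) (at x)"
  shows "(LBINT x=a..b. f x) = F b - F a"
  using assms
  by (intro interval_integral_FTC_finite)
     (auto simp: has_real_derivative_iff_has_vector_derivative has_vector_derivative_at_within)

lemma gauss_double_int_corners:
  "\<exists>K. gauss_comb 1 (n + m + 2) K \<and> (\<forall>\<sigma>>0. \<forall>a b a' b'.
     gauss_double_int n m a b a' b' \<sigma> = K \<sigma> b b' - K \<sigma> b a' - K \<sigma> a b' + K \<sigma> a a')"
proof -
  obtain H where H: "gauss_comb 1 (n + m + 1) H"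
    "\<forall>\<sigma>>0. \<forall>x y. ((\<lambda>y. H \<sigma> x y) has_real_derivative gauss_term n m 0 \<sigma> x y) (at y)"
    using gauss_comb_primitive[OF gauss_comb_term[of 0 0 n m "n + m"]] by auto
  obtain K where K: "gauss_comb 1 (n + m + 2) K"
    "\<forall>\<sigma>>0. \<forall>x y. ((\<lambda>x. K \<sigma> x y) has_real_derivative H \<sigma> x y) (at x)"
    using gauss_comb_primitive_x[OF H(1)] by auto
  have "gauss_double_int n m a b a' b' \<sigma> = K \<sigma> b b' - K \<sigma> b a' - K \<sigma> a b' + K \<sigma> a a'"
    if "\<sigma> > 0" for \<sigma> a b a' b'
  proof -
    have "(LBINT y=a'..b'. x ^ n * y ^ m * exp (- (\<sigma>\<^sup>2 * (x - y)\<^sup>2))) = H \<sigma> x b' - H \<sigma> x a'" for x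
      using H(2) that
      by (intro interval_integral_FTC_real)
         (auto intro!: continuous_intros simp: gauss_term_def gauss_kernel_def)
    then have "gauss_double_int n m a b a' b' \<sigma> = (LBINT x=a..b. H \<sigma> x b' - H \<sigma> x a')"
      by (simp add: gauss_double_int_def)
    also have "\<dots> = (K \<sigma> b b' - K \<sigma> b a') - (K \<sigma> a b' - K \<sigma> a a')"
      using K(2) that
      by (intro interval_integral_FTC_real continuous_on_diff continuous_on_gauss_comb[OF H(1)])
         (auto intro!: DERIV_diff)
    finally show ?thesis by simp
  qed
  then show ?thesis using K(1) by blast
qed

definition hom_poly :: "nat \<Rightarrow> (nat \<Rightarrow> rat) \<Rightarrow> real \<Rightarrow> real \<Rightarrow> real" where
  "hom_poly d c x y = (\<Sum>l\<in>{0..d}. of_rat (c l) * x ^ l * y ^ (d - l))"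

lemma hom_poly_monomial:
  "i \<le> d \<Longrightarrow> hom_poly d (\<lambda>l. if l = i then c else 0) x y = of_rat c * x ^ i * y ^ (d - i)"
  by (simp add: hom_poly_def if_distrib[of of_rat] if_distrib[of "\<lambda>a. a * _"] cong: if_cong)

lemma hom_poly_zero [simp]: "hom_poly d (\<lambda>l. 0) x y = 0"
  by (simp add: hom_poly_def)

lemma hom_poly_scale: "hom_poly d (\<lambda>l. c * p l) x y = of_rat c * hom_poly d p x y"
  by (simp add: hom_poly_def sum_distrib_left of_rat_mult mult.assoc)

lemma hom_poly_minus: "hom_poly d (\<lambda>l. - p l) x y = - hom_poly d p x y"
  by (simp add: hom_poly_def sum_negf of_rat_minus)

lemma hom_poly_add: "hom_poly d (\<lambda>l. p l + q l) x y = hom_poly d p x y + hom_poly d q x y"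
  by (simp add: hom_poly_def sum.distrib of_rat_add distrib_right)

lemma gauss_comb_explicit:
  "gauss_comb w D F \<Longrightarrow> 0 < w \<Longrightarrow> \<exists>q. \<forall>\<sigma> x y.
     F \<sigma> x y = (\<Sum>\<nu>\<in>{1..D}. hom_poly (D - \<nu>) (q \<nu>) x y * gauss_kernel \<nu> \<sigma> (x - y))"
proof (induction rule: gauss_comb.induct)
  case (gauss_comb_term \<nu> i j D)
  let ?q = "\<lambda>\<nu>'. if \<nu>' = \<nu> then (\<lambda>l. if l = i then 1 else 0) else (\<lambda>l. 0)"
  have "hom_poly (D - \<nu>') (?q \<nu>') x y * gauss_kernel \<nu>' \<sigma> (x - y) =
      (if \<nu>' = \<nu> then gauss_term i j \<nu> \<sigma> x y else 0)" for \<nu>' \<sigma> x y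
    using gauss_comb_term.hyps(2)[symmetric] by (simp add: hom_poly_monomial gauss_term_def)
  then show ?case
    using gauss_comb_term by (intro exI[of _ ?q]) (simp add: sum.delta)
next
  case (gauss_comb_scale D F c)
  then obtain q where "\<forall>\<sigma> x y.
     F \<sigma> x y = (\<Sum>\<nu>\<in>{1..D}. hom_poly (D - \<nu>) (q \<nu>) x y * gauss_kernel \<nu> \<sigma> (x - y))"
    by blast
  then show ?case
    by (intro exI[of _ "\<lambda>\<nu> l. c * q \<nu> l"]) (simp add: hom_poly_scale sum_distrib_left mult.assoc)
next
  case (gauss_comb_add D F G)
  then obtain p q where "\<forall>\<sigma> x y.
     F \<sigma> x y = (\<Sum>\<nu>\<in>{1..D}. hom_poly (D - \<nu>) (p \<nu>) x y * gauss_kernel \<nu> \<sigma> (x - y))"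
    "\<forall>\<sigma> x y. G \<sigma> x y = (\<Sum>\<nu>\<in>{1..D}. hom_poly (D - \<nu>) (q \<nu>) x y * gauss_kernel \<nu> \<sigma> (x - y))"
    by blast
  then show ?case
    by (intro exI[of _ "\<lambda>\<nu> l. p \<nu> l + q \<nu> l"]) (simp add: hom_poly_add sum.distrib distrib_right)
qed

theorem lemma2:
  fixes n m :: nat
  shows "\<exists>p :: nat \<Rightarrow> bool \<Rightarrow> bool \<Rightarrow> nat \<Rightarrow> rat.
    \<forall>a b a' b' \<sigma> :: real. \<sigma> > 0 \<longrightarrow>
      gauss_double_int n m a b a' b' \<sigma> =
      (\<Sum>\<nu>\<in>{1..n+m+2}. \<Sum>i\<in>(UNIV :: bool set). \<Sum>j\<in>(UNIV :: bool set).
         (let c = (if i then b else a); c' = (if j then b' else a'); \<delta> = c - c' in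
           (\<Sum>l\<in>{0..n+m+2-\<nu>}. of_rat (p \<nu> i j l) * c ^ l * c' ^ (n+m+2-\<nu>-l))
           * (if even \<nu> then (1 / \<sigma> ^ \<nu>) * exp (- (\<sigma>\<^sup>2 * \<delta>\<^sup>2))
              else (1 / \<sigma> ^ \<nu>) * Erf (\<sigma> * \<delta>))))"
proof -
  obtain K where K: "gauss_comb 1 (n + m + 2) K" and corners: "\<forall>\<sigma>>0. \<forall>a b a' b'.
      gauss_double_int n m a b a' b' \<sigma> = K \<sigma> b b' - K \<sigma> b a' - K \<sigma> a b' + K \<sigma> a a'"
    using gauss_double_int_corners by blast
  obtain q where q: "\<forall>\<sigma> x y. K \<sigma> x y =
      (\<Sum>\<nu>\<in>{1..n+m+2}. hom_poly (n + m + 2 - \<nu>) (q \<nu>) x y * gauss_kernel \<nu> \<sigma> (x - y))"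
    using gauss_comb_explicit[OF K] by auto
  show ?thesis
    by (intro exI[of _ "\<lambda>\<nu> i j l. (if i = j then 1 else -1) * q \<nu> l"] allI impI,
        unfold Let_def hom_poly_def[symmetric] gauss_kernel_def[symmetric])
       (simp add: corners q UNIV_bool hom_poly_minus sum.distrib sum_subtractf algebra_simps)
qed

end
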